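(* Let $G$ be a group with finite generating set $S$ (with $S=S^{-1}$, $e\notin S$), and suppose there is $R\in\mathbb{N}$ such that $\kappa(g)>0$ for all $g\in G$ with $|g|>R$. Then $G$ is finite.
   Context: For a group $G$ with finite generating set $S$ ($S=S^{-1}$, $e\notin S$), $|x|$ denotes the word length of $x\in G$ with respect to $S$. For $g\in G$ define $\mathrm{Av}(g)=\frac{1}{|S|}\sum_{a\in S}|a^{-1}ga|$, and for $g\neq e$ define the curvature $\kappa(g)=\frac{|g|-\mathrm{Av}(g)}{|g|}$. *)

theory Defs
  imports "HOL-Algebra.Algebra"
begin

definition word_length :: "('a, 'b) monoid_scheme \<Rightarrow> 'a set \<Rightarrow> 'a \<Rightarrow> nat" where
  "word_length G S g =
     (LEAST n. \<exists>ws. set ws \<subseteq> S \<and> length ws = n \<and> foldr (\<lambda>a b. a \<otimes>\<^bsub>G\<^esub> b) ws \<one>\<^bsub>G\<^esub> = g)"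

definition Av :: "('a, 'b) monoid_scheme \<Rightarrow> 'a set \<Rightarrow> 'a \<Rightarrow> real" where
  "Av G S g = (1 / real (card S)) *
     (\<Sum>a\<in>S. real (word_length G S (inv\<^bsub>G\<^esub> a \<otimes>\<^bsub>G\<^esub> g \<otimes>\<^bsub>G\<^esub> a)))"

definition curvature :: "('a, 'b) monoid_scheme \<Rightarrow> 'a set \<Rightarrow> 'a \<Rightarrow> real" where
  "curvature G S g = (real (word_length G S g) - Av G S g) / real (word_length G S g)"

end

theory Submission
  imports Defs
begin

(* Conjugation by a generator changes word length by at most 2, and (g, a) \<mapsto> (a\<inverse> g a, a\<inverse>)
   is injective on G \<times> S.  On the ball B_n, the pairs it moves out of B_n \<times> S are balanced by
   pairs it moves in, and those have length > n; so summed over B_n, conjugation does not decrease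
   length.  Positive curvature makes each element of length > R lose at least 1 in total, while the
   others gain at most 2|S|; hence B_n has at most 2|S| |B_R| elements of length > R.  The balls
   are therefore uniformly bounded in size, and G is finite. *)

lemma sum_le_sum_reindex_if_escapes_above:
  fixes f :: "'a \<Rightarrow> 'b::{semiring_1,ordered_comm_monoid_add}"
  assumes "finite T" "inj_on \<phi> T"
    and "\<And>x. x \<in> T \<Longrightarrow> f x \<le> c"
    and "\<And>x. x \<in> T \<Longrightarrow> \<phi> x \<notin> T \<Longrightarrow> c \<le> f (\<phi> x)"
  shows "sum f T \<le> sum (f \<circ> \<phi>) T"
proof -
  define U where "U = \<phi> ` T"
  have "finite U" "card U = card T"
    using assms(1,2) by (simp_all add: U_def card_image)
  then have card_diff: "card (T - U) = card (U - T)"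
    using assms(1) card_Diff_subset_Int[of U T] card_Diff_subset_Int[of T U]
    by (simp add: Int_commute)
  have "sum f T = sum f (T \<inter> U) + sum f (T - U)"
    using assms(1) sum.Int_Diff by blast
  also have "sum f (T - U) \<le> of_nat (card (T - U)) * c"
    using assms(3) by (intro sum_bounded_above) auto
  also have "\<dots> = of_nat (card (U - T)) * c"
    by (simp only: card_diff)
  also have "\<dots> \<le> sum f (U - T)"
    using assms(4) by (intro sum_bounded_below) (auto simp: U_def)
  also have "sum f (T \<inter> U) + sum f (U - T) = sum f U"
    using \<open>finite U\<close> sum.Int_Diff[of U f T] by (simp add: Int_commute)
  also have "\<dots> = sum (f \<circ> \<phi>) T"
    unfolding U_def using sum.reindex[OF assms(2)] .
  finally show ?thesis by (simp add: add_left_mono)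
qed

lemma finite_if_card_levels_bounded:
  fixes h :: "'a \<Rightarrow> nat"
  assumes "\<And>n. finite {x \<in> A. h x \<le> n}" "\<And>n. card {x \<in> A. h x \<le> n} \<le> K"
  shows "finite A"
proof (rule ccontr)
  assume "infinite A"
  then obtain F where F: "F \<subseteq> A" "finite F" "card F = Suc K"
    using infinite_arbitrarily_large by blast
  then have "F \<subseteq> {x \<in> A. h x \<le> Max (h ` F)}"
    by auto
  then have "card F \<le> card {x \<in> A. h x \<le> Max (h ` F)}"
    by (rule card_mono[OF assms(1)])
  also have "\<dots> \<le> K"
    by (rule assms(2))
  finally show False
    using F by simp
qed

abbreviation word_prod :: "('a, 'b) monoid_scheme \<Rightarrow> 'a list \<Rightarrow> 'a" where
  "word_prod G ws \<equiv> foldr (\<lambda>a b. a \<otimes>\<^bsub>G\<^esub> b) ws \<one>\<^bsub>G\<^esub>"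

lemma (in monoid) word_prod_closed:
  "set ws \<subseteq> carrier G \<Longrightarrow> word_prod G ws \<in> carrier G"
  by (induction ws) auto

lemma (in monoid) word_prod_append:
  assumes "set xs \<subseteq> carrier G" "set ys \<subseteq> carrier G"
  shows "word_prod G (xs @ ys) = word_prod G xs \<otimes> word_prod G ys"
  using assms by (induction xs) (auto simp: m_assoc word_prod_closed)

lemma word_length_le:
  "set ws \<subseteq> S \<Longrightarrow> word_length G S (word_prod G ws) \<le> length ws"
  unfolding word_length_def by (rule Least_le) blast

lemma word_length_attained:
  assumes "set ws \<subseteq> S" "word_prod G ws = g"
  obtains vs where "set vs \<subseteq> S" "length vs = word_length G S g" "word_prod G vs = g"
proof -
  have "\<exists>n vs. set vs \<subseteq> S \<and> length vs = n \<and> word_prod G vs = g"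
    using assms by blast
  from LeastI_ex[OF this] show ?thesis
    using that unfolding word_length_def by blast
qed

locale symmetric_generating_set = group G for G (structure) +
  fixes S :: "'a set"
  assumes gens_closed: "S \<subseteq> carrier G"
    and generate_eq: "generate G S = carrier G"
    and inv_gen_closed: "s \<in> S \<Longrightarrow> inv s \<in> S"
begin

abbreviation len :: "'a \<Rightarrow> nat" where
  "len \<equiv> word_length G S"

definition word_ball :: "nat \<Rightarrow> 'a set" where
  "word_ball n = {g \<in> carrier G. len g \<le> n}"

lemma geodesic_wordE:
  assumes "g \<in> carrier G"
  obtains ws where "set ws \<subseteq> S" "length ws = len g" "word_prod G ws = g"
proof -
  have "\<exists>ws. set ws \<subseteq> S \<and> word_prod G ws = g" if "g \<in> generate G S" for g
    using that
  proof (induction rule: generate.induct)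
    case one
    show ?case by (rule exI[of _ "[]"]) simp
  next
    case (incl h)
    then show ?case using gens_closed by (intro exI[of _ "[h]"]) auto
  next
    case (inv h)
    then show ?case using gens_closed inv_gen_closed
      by (intro exI[of _ "[inv h]"]) auto
  next
    case (eng h1 h2)
    then obtain xs ys where "set xs \<subseteq> S" "word_prod G xs = h1" "set ys \<subseteq> S" "word_prod G ys = h2"
      by blast
    then show ?case using gens_closed word_prod_append[of xs ys]
      by (intro exI[of _ "xs @ ys"]) auto
  qed
  then show ?thesis
    using assms generate_eq that word_length_attained by metis
qed

lemma len_mult_le:
  assumes "x \<in> carrier G" "y \<in> carrier G"
  shows "len (x \<otimes> y) \<le> len x + len y"
proof -
  obtain xs where xs: "set xs \<subseteq> S" "length xs = len x" "word_prod G xs = x"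
    using geodesic_wordE[OF assms(1)] .
  obtain ys where ys: "set ys \<subseteq> S" "length ys = len y" "word_prod G ys = y"
    using geodesic_wordE[OF assms(2)] .
  have "word_prod G (xs @ ys) = x \<otimes> y"
    using xs ys gens_closed word_prod_append[of xs ys] by auto
  then show ?thesis
    using word_length_le[of "xs @ ys" S G] xs ys by simp
qed

lemma len_gen_le: "a \<in> S \<Longrightarrow> len a \<le> 1"
  using word_length_le[of "[a]" S G] gens_closed by auto

lemma len_conj_le:
  assumes "g \<in> carrier G" "a \<in> S"
  shows "len (inv a \<otimes> g \<otimes> a) \<le> len g + 2"
proof -
  have a: "a \<in> carrier G"
    using assms(2) gens_closed by auto
  have "len (inv a \<otimes> g \<otimes> a) \<le> len (inv a) + len g + len a"
    using len_mult_le[of "inv a \<otimes> g" a] len_mult_le[of "inv a" g] a assms(1) by simp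
  then show ?thesis
    using len_gen_le[OF assms(2)] len_gen_le[OF inv_gen_closed[OF assms(2)]] by simp
qed

lemma finite_word_ball:
  assumes "finite S"
  shows "finite (word_ball n)"
proof -
  have "word_ball n \<subseteq> word_prod G ` {ws. set ws \<subseteq> S \<and> length ws \<le> n}"
  proof
    fix g assume "g \<in> word_ball n"
    then have "g \<in> carrier G" "len g \<le> n"
      by (auto simp: word_ball_def)
    then show "g \<in> word_prod G ` {ws. set ws \<subseteq> S \<and> length ws \<le> n}"
      using geodesic_wordE by (metis (mono_tags, lifting) image_eqI mem_Collect_eq)
  qed
  then show ?thesis
    using finite_lists_length_le[OF assms] finite_surj by blast
qed

lemma sum_len_le_sum_len_conj:
  assumes "finite S"
  shows "card S * (\<Sum>g\<in>word_ball n. len g) \<le> (\<Sum>g\<in>word_ball n. \<Sum>a\<in>S. len (inv a \<otimes> g \<otimes> a))"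
proof -
  define \<phi> where "\<phi> = (\<lambda>(g, a). (inv a \<otimes> g \<otimes> a, inv a))"
  define T where "T = word_ball n \<times> S"
  have carrier_T: "g \<in> carrier G" "a \<in> carrier G" if "(g, a) \<in> T" for g a
    using that gens_closed by (auto simp: T_def word_ball_def)
  have "inj_on \<phi> T"
  proof (rule inj_onI, clarify)
    fix g a h b
    assume "(g, a) \<in> T" "(h, b) \<in> T" "\<phi> (g, a) = \<phi> (h, b)"
    then have "(inv a \<otimes> g \<otimes> a, inv a) = (inv b \<otimes> h \<otimes> b, inv b)"
      by (simp only: \<phi>_def prod.case)
    then have eq: "inv a = inv b" "inv a \<otimes> g \<otimes> a = inv b \<otimes> h \<otimes> b"
      by blast+
    have carrier: "g \<in> carrier G" "a \<in> carrier G" "h \<in> carrier G" "b \<in> carrier G"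
      using carrier_T \<open>(g, a) \<in> T\<close> \<open>(h, b) \<in> T\<close> by auto
    then have "a = b"
      using eq inj_onD[OF inv_inj] by simp
    with eq carrier show "g = h \<and> a = b"
      by (simp add: m_assoc)
  qed
  moreover have "len (fst p) \<le> n" if "p \<in> T" for p
    using that by (auto simp: T_def word_ball_def)
  moreover have "n \<le> len (fst (\<phi> p))" if p_T: "p \<in> T" and escapes: "\<phi> p \<notin> T" for p
  proof -
    obtain g a where p: "p = (g, a)" "g \<in> carrier G" "a \<in> S"
      using p_T by (cases p) (auto simp: T_def word_ball_def)
    then have "inv a \<otimes> g \<otimes> a \<notin> word_ball n"
      using escapes inv_gen_closed by (simp add: T_def \<phi>_def)
    moreover have "inv a \<otimes> g \<otimes> a \<in> carrier G"
      using p gens_closed by auto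
    ultimately show ?thesis
      using p by (simp add: \<phi>_def word_ball_def)
  qed
  moreover have "finite T"
    using assms finite_word_ball by (simp add: T_def)
  ultimately have "(\<Sum>p\<in>T. len (fst p)) \<le> (\<Sum>p\<in>T. len (fst (\<phi> p)))"
    using sum_le_sum_reindex_if_escapes_above[of T \<phi> "\<lambda>p. len (fst p)" n] by (simp add: o_def)
  then show ?thesis
    by (simp add: T_def \<phi>_def sum.cartesian_product' sum_distrib_left mult.commute)
qed

lemma card_word_ball_le:
  assumes "finite S"
    and curvature_pos: "\<And>g. g \<in> carrier G \<Longrightarrow> R < len g \<Longrightarrow> (\<Sum>a\<in>S. len (inv a \<otimes> g \<otimes> a)) < card S * len g"
  shows "card (word_ball n) \<le> (2 * card S + 1) * card (word_ball R)"
proof -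
  define D where "D g = (\<Sum>a\<in>S. len (inv a \<otimes> g \<otimes> a))" for g
  define long where "long = {g \<in> word_ball n. R < len g}"
  define short where "short = {g \<in> word_ball n. len g \<le> R}"
  have fin: "finite (word_ball n)"
    using finite_word_ball[OF assms(1)] .
  have "D g + (if R < len g then 1 else 0) \<le> card S * len g + (if len g \<le> R then 2 * card S else 0)"
    if "g \<in> word_ball n" for g
  proof -
    have "D g \<le> (\<Sum>a\<in>S. len g + 2)"
      unfolding D_def using that len_conj_le by (intro sum_mono) (auto simp: word_ball_def)
    then have "D g \<le> card S * len g + 2 * card S"
      by (simp add: algebra_simps)
    moreover have "R < len g \<Longrightarrow> D g < card S * len g"
      using curvature_pos that by (simp add: D_def word_ball_def)
    ultimately show ?thesis
      by (cases "R < len g") simp_all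
  qed
  then have "(\<Sum>g\<in>word_ball n. D g + (if R < len g then 1 else 0))
      \<le> (\<Sum>g\<in>word_ball n. card S * len g + (if len g \<le> R then 2 * card S else 0))"
    by (rule sum_mono)
  moreover have "(\<Sum>g\<in>word_ball n. if R < len g then 1 else 0) = card long"
    unfolding long_def sum.inter_filter[OF fin, symmetric] by simp
  moreover have "(\<Sum>g\<in>word_ball n. if len g \<le> R then 2 * card S else 0) = 2 * card S * card short"
    unfolding short_def sum.inter_filter[OF fin, symmetric] by simp
  ultimately have "(\<Sum>g\<in>word_ball n. D g) + card long
      \<le> card S * (\<Sum>g\<in>word_ball n. len g) + 2 * card S * card short"
    by (simp add: sum.distrib sum_distrib_left)
  then have "card long \<le> 2 * card S * card short"
    using sum_len_le_sum_len_conj[OF assms(1), of n] unfolding D_def by linarith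
  moreover have "word_ball n = long \<union> short"
    by (auto simp: long_def short_def)
  then have "card (word_ball n) \<le> card long + card short"
    by (simp add: card_Un_le)
  ultimately have "card (word_ball n) \<le> (2 * card S + 1) * card short"
    by simp
  also have "\<dots> \<le> (2 * card S + 1) * card (word_ball R)"
    using finite_word_ball[OF assms(1)]
    by (intro mult_le_mono2 card_mono) (auto simp: short_def word_ball_def)
  finally show ?thesis .
qed

lemma sum_len_conj_less_if_curvature_pos:
  assumes "finite S" "S \<noteq> {}" "0 < len g" "curvature G S g > 0"
  shows "(\<Sum>a\<in>S. len (inv a \<otimes> g \<otimes> a)) < card S * len g"
proof -
  have "0 < card S"
    using assms(1,2) by (simp add: card_gt_0_iff)
  moreover have "Av G S g < len g"
    using assms(3,4) by (simp add: curvature_def zero_less_divide_iff)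
  moreover have "Av G S g = real (\<Sum>a\<in>S. len (inv a \<otimes> g \<otimes> a)) / real (card S)"
    by (simp add: Av_def)
  ultimately have "real (\<Sum>a\<in>S. len (inv a \<otimes> g \<otimes> a)) < real (card S) * real (len g)"
    by (simp add: divide_less_eq mult.commute)
  then show ?thesis
    by (simp only: of_nat_mult[symmetric] of_nat_less_iff)
qed

end

theorem mainTheorem13:
  fixes G :: "('a, 'b) monoid_scheme" and S :: "'a set"
  assumes "group G"
    and "S \<subseteq> carrier G"
    and "finite S"
    and "generate G S = carrier G"
    and "\<forall>s\<in>S. inv\<^bsub>G\<^esub> s \<in> S"
    and "\<one>\<^bsub>G\<^esub> \<notin> S"
    and "\<exists>R::nat. \<forall>g\<in>carrier G. word_length G S g > R \<longrightarrow> curvature G S g > 0"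
  shows "finite (carrier G)"
proof -
  interpret symmetric_generating_set G S
    using assms(1,2,4,5)
    by (intro symmetric_generating_set.intro symmetric_generating_set_axioms.intro) auto
  show ?thesis
  proof (cases "S = {}")
    case True
    then have "carrier G = {\<one>\<^bsub>G\<^esub>}"
      using generate_empty assms(4) by simp
    then show ?thesis
      by simp
  next
    case False
    obtain R where R: "\<forall>g\<in>carrier G. R < len g \<longrightarrow> curvature G S g > 0"
      using assms(7) by blast
    have bound: "card (word_ball n) \<le> (2 * card S + 1) * card (word_ball R)" for n
      using R by (intro card_word_ball_le[OF assms(3)] sum_len_conj_less_if_curvature_pos[OF assms(3) False])
        auto
    show ?thesis
      using finite_word_ball[OF assms(3)] bound unfolding word_ball_def
      by (rule finite_if_card_levels_bounded)
  qed
qed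

end
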